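(* Suppose $F\in\mathcal N$ is $n$ times renormalizable, and for $k=0,1,\dots,n$ let $F_k=R^kF$ and $\boldsymbol\delta_k=\pi_{\mathbf z}\circ F_k$. Then for $k=1,\dots,n$: $X_k(w)=X_{k-1}\circ\psi^k_c(w)-\mathbf q_{k-1}(\sigma_{k-1}x)$, $Y_k(w)=Z_{k-1}\circ\psi^k_c(w)\cdot\big[Y_{k-1}\circ\psi^k_v(w)+Z_{k-1}\circ\psi^k_v(w)\cdot\mathbf q_{k-1}(\sigma_{k-1}y)\big]$, $Z_k(w)=Z_{k-1}\circ\psi^k_c(w)\cdot Z_{k-1}\circ\psi^k_v(w)$.
   Context: Fix an integer $m\ge 1$ and a hypercube $B\subset\mathbb R^{m+2}$; points are $w=(x,y,\mathbf z)$, $\mathbf z=(z_1,\dots,z_m)$. An $(m+2)$-dimensional Hénon-like map is an analytic orientation-preserving map $F(x,y,\mathbf z)=(f(x)-\varepsilon(x,y,\mathbf z),\,x,\,\boldsymbol\delta(x,y,\mathbf z))$ on $B$ with $f$ unimodal, $\boldsymbol\delta=(\delta^1,\dots,\delta^m)$, $\|\varepsilon\|,\|\boldsymbol\delta\|\le C\bar\varepsilon$ for small $\bar\varepsilon>0$. Its renormalization is $RF=\Lambda\circ H\circ F^2\circ H^{-1}\circ\Lambda^{-1}$ where $H(x,y,\mathbf z)=(f(x)-\varepsilon(x,y,\mathbf z),\,y,\,\mathbf z-\boldsymbol\delta(y,f^{-1}(y),\mathbf 0))$ and $\Lambda^{-1}(w)=\sigma_0w$ is a dilation by a suitable constant. For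 the $k$-th renormalization $F_k(w)=(f_k(x)-\varepsilon_k(w),x,\boldsymbol\delta_k(w))$ with $H_k$, dilation $\Lambda_k^{-1}(w)=\sigma_kw$, set $\psi^{k+1}_v=H_k^{-1}\circ\Lambda_k^{-1}$ and $\psi^{k+1}_c=F_k\circ\psi^{k+1}_v$. Notation: $X_k=(\partial_x\delta^1_k,\dots,\partial_x\delta^m_k)^T$, $Y_k=(\partial_y\delta^1_k,\dots,\partial_y\delta^m_k)^T$, $Z_k$ the $m\times m$ matrix with $(j,i)$ entry $\partial_{z_i}\delta^j_k$ (and $X=X_0$, $Y=Y_0$, $Z=Z_0$); $\mathbf q_k(y)=\frac{d}{dy}\boldsymbol\delta_k(y,f_k^{-1}(y),\mathbf 0)$ (column vector). $\mathcal N$ is the set of renormalizable $(m+2)$-dimensional Hénon-like maps $F$ with $Y\circ F(w)+Z\circ F(w)\cdot X(w)=\mathbf 0$ for all $w\in\psi^1_c(B)\cup\psi^1_v(B)$. *)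

theory Defs
  imports "HOL-Analysis.Analysis"
begin

text \<open>Points of R^(m+2) are triples (x, y, z) with z a vector indexed by the finite type 'm
  (so m = CARD('m) >= 1).\<close>

type_synonym 'm pt = "real \<times> real \<times> (real ^ 'm)"

definition hypercube :: "'m::finite pt set \<Rightarrow> bool" where
  "hypercube B \<longleftrightarrow> (\<exists>c r. 0 < r \<and> B = cbox (c - r *\<^sub>R One) (c + r *\<^sub>R One))"

definition henon :: "(real \<Rightarrow> real) \<Rightarrow> ('m::finite pt \<Rightarrow> real) \<Rightarrow> ('m pt \<Rightarrow> real ^ 'm)
    \<Rightarrow> 'm pt \<Rightarrow> 'm pt" where
  "henon f eps dl = (\<lambda>(x, y, z). (f x - eps (x, y, z), x, dl (x, y, z)))"

definition Hmap :: "(real \<Rightarrow> real) \<Rightarrow> ('m::finite pt \<Rightarrow> real) \<Rightarrow> ('m pt \<Rightarrow> real ^ 'm)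
    \<Rightarrow> (real \<Rightarrow> real) \<Rightarrow> 'm pt \<Rightarrow> 'm pt" where
  "Hmap f eps dl finv = (\<lambda>(x, y, z). (f x - eps (x, y, z), y, z - dl (y, finv y, 0)))"

text \<open>psi_v = H^{-1} o Lambda^{-1}, Lambda^{-1} w = s w;  psi_c = F o psi_v.\<close>
definition psi_v :: "('m::finite pt \<Rightarrow> 'm pt) \<Rightarrow> real \<Rightarrow> 'm pt \<Rightarrow> 'm pt" where
  "psi_v Hinv s = (\<lambda>w. Hinv (s *\<^sub>R w))"

definition psi_c :: "('m::finite pt \<Rightarrow> 'm pt) \<Rightarrow> ('m pt \<Rightarrow> 'm pt) \<Rightarrow> real \<Rightarrow> 'm pt \<Rightarrow> 'm pt" where
  "psi_c F Hinv s = F \<circ> psi_v Hinv s"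

definition Xd :: "('m::finite pt \<Rightarrow> real ^ 'm) \<Rightarrow> 'm pt \<Rightarrow> real ^ 'm" where
  "Xd dl = (\<lambda>(x, y, z). vector_derivative (\<lambda>t. dl (t, y, z)) (at x))"

definition Yd :: "('m::finite pt \<Rightarrow> real ^ 'm) \<Rightarrow> 'm pt \<Rightarrow> real ^ 'm" where
  "Yd dl = (\<lambda>(x, y, z). vector_derivative (\<lambda>t. dl (x, t, z)) (at y))"

text \<open>Zd dl w $ j $ i = partial derivative of delta^j with respect to z_i.\<close>
definition Zd :: "('m::finite pt \<Rightarrow> real ^ 'm) \<Rightarrow> 'm pt \<Rightarrow> real ^ 'm ^ 'm" where
  "Zd dl = (\<lambda>(x, y, z). \<chi> j i.
     vector_derivative (\<lambda>t. dl (x, y, \<chi> l. if l = i then t else z $ l)) (at (z $ i)) $ j)"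

definition qd :: "('m::finite pt \<Rightarrow> real ^ 'm) \<Rightarrow> (real \<Rightarrow> real) \<Rightarrow> real \<Rightarrow> real ^ 'm" where
  "qd dl finv t0 = vector_derivative (\<lambda>t. dl (t, finv t, 0)) (at t0)"

text \<open>One renormalization step: F' = R F = Lambda o H o F^2 o H^{-1} o Lambda^{-1},
  with Lambda^{-1} w = s w, H^{-1} (here Hinv) the inverse of H between a domain D and
  a neighbourhood of s B, and psi_v(B), psi_c(B) contained in B.\<close>
definition renorm_step ::
  "'m::finite pt set \<Rightarrow> ('m::finite pt \<Rightarrow> 'm pt) \<Rightarrow> ('m pt \<Rightarrow> 'm pt) \<Rightarrow> ('m pt \<Rightarrow> 'm pt) \<Rightarrow> real
     \<Rightarrow> ('m::finite pt \<Rightarrow> 'm pt) \<Rightarrow> bool" where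
  "renorm_step B F H Hinv s F' \<longleftrightarrow>
     s \<noteq> 0 \<and>
     (\<exists>U D. open U \<and> B \<subseteq> U \<and>
        (\<forall>w\<in>U. Hinv (s *\<^sub>R w) \<in> D \<and> H (Hinv (s *\<^sub>R w)) = s *\<^sub>R w
                 \<and> Hinv differentiable (at (s *\<^sub>R w))) \<and>
        (\<forall>v\<in>D. Hinv (H v) = v) \<and>
        (\<forall>w\<in>U. F (F (Hinv (s *\<^sub>R w))) \<in> D \<and>
                 F' w = (1 / s) *\<^sub>R H (F (F (Hinv (s *\<^sub>R w)))))) \<and>
     psi_v Hinv s ` B \<subseteq> B \<and> psi_c F Hinv s ` B \<subseteq> B"

text \<open>The sequence F_k = henon (f k) (eps k) (dl k), k = 0..n, of renormalizations of F_0,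
  with inverse branches finv k of f k, dilation constants sg k and inverses Hinv k of H_k.\<close>
definition renormalizable_n ::
  "'m::finite pt set \<Rightarrow> nat \<Rightarrow> (nat \<Rightarrow> real \<Rightarrow> real) \<Rightarrow> (nat \<Rightarrow> 'm pt \<Rightarrow> real)
     \<Rightarrow> (nat \<Rightarrow> 'm pt \<Rightarrow> real ^ 'm) \<Rightarrow> (nat \<Rightarrow> real \<Rightarrow> real) \<Rightarrow> (nat \<Rightarrow> real)
     \<Rightarrow> (nat \<Rightarrow> 'm pt \<Rightarrow> 'm pt) \<Rightarrow> bool" where
  "renormalizable_n B n f eps dl finv sg Hinv \<longleftrightarrow>
     (\<forall>k\<le>n. (\<forall>t. f k differentiable (at t)) \<and> (\<forall>w. eps k differentiable (at w))
             \<and> (\<forall>w. dl k differentiable (at w))) \<and>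
     (\<forall>k<n.
        (\<forall>x y z. (x, y, z) \<in> B \<longrightarrow>
           (\<forall>t\<in>{sg k * x, sg k * y}.
              f k (finv k t) = t \<and> finv k differentiable (at t))) \<and>
        renorm_step B (henon (f k) (eps k) (dl k)) (Hmap (f k) (eps k) (dl k) (finv k))
          (Hinv k) (sg k) (henon (f (Suc k)) (eps (Suc k)) (dl (Suc k))))"

definition in_N ::
  "'m::finite pt set \<Rightarrow> (real \<Rightarrow> real) \<Rightarrow> ('m::finite pt \<Rightarrow> real) \<Rightarrow> ('m pt \<Rightarrow> real ^ 'm)
     \<Rightarrow> (real \<Rightarrow> real) \<Rightarrow> real \<Rightarrow> ('m::finite pt \<Rightarrow> 'm pt) \<Rightarrow> ('m pt \<Rightarrow> 'm pt) \<Rightarrow> bool" where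
  "in_N B f eps dl finv s Hinv F1 \<longleftrightarrow>
     (\<forall>x y z. (x, y, z) \<in> B \<longrightarrow>
        (\<forall>t\<in>{s * x, s * y}. f (finv t) = t \<and> finv differentiable (at t))) \<and>
     renorm_step B (henon f eps dl) (Hmap f eps dl finv) Hinv s F1 \<and>
     (\<forall>w \<in> psi_c (henon f eps dl) Hinv s ` B \<union> psi_v Hinv s ` B.
        Yd dl (henon f eps dl w) + Zd dl (henon f eps dl w) *v Xd dl w = 0)"

end

theory Submission
  imports Defs
begin

text \<open>Write \<open>\<Lambda>\<^sup>-\<^sup>1 w = s w\<close>. Solving \<open>H v = s w\<close> determines every coordinate of
  \<open>v = H\<^sup>-\<^sup>1(s w)\<close> except the first one, \<open>A w\<close>, and then
  \<open>\<delta>'(w) = s\<^sup>-\<^sup>1 (\<delta>(F(v)) - \<delta>(s x, f\<^sup>-\<^sup>1(s x), 0))\<close> with \<open>F(v) = (s x, A w, \<delta>(v))\<close>.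
  Differentiating by the chain rule, the unknown derivative of \<open>A\<close> enters each partial
  derivative of \<open>\<delta>'\<close> only through the factor \<open>Y(F v) + Z(F v) X(v)\<close>, which vanishes for
  maps in \<open>\<N>\<close>; what remains are the stated recursions. The vanishing propagates to every
  renormalization: the recursions and \<open>\<psi>\<^sub>v \<circ> F' = F \<circ> \<psi>\<^sub>c\<close> turn
  \<open>Y'(F' w) + Z'(F' w) X'(w)\<close> into \<open>Z(\<psi>\<^sub>c(F' w))\<close> applied to the same expression for \<open>F\<close>
  at \<open>\<psi>\<^sub>c w\<close>.\<close>

section \<open>Partial derivatives and the Frechet derivative\<close>

lemma vector_derivative_chain_line:
  assumes "(d has_derivative L) (at (c t0))"
    and "(c has_derivative (\<lambda>h. h *\<^sub>R e)) (at t0)"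
  shows "vector_derivative (\<lambda>t. d (c t)) (at t0) = L e"
proof -
  have "(d \<circ> c has_derivative L \<circ> (\<lambda>h. h *\<^sub>R e)) (at t0)"
    by (rule diff_chain_at[OF assms(2,1)])
  moreover have "L \<circ> (\<lambda>h. h *\<^sub>R e) = (\<lambda>h. h *\<^sub>R L e)"
    using has_derivative_linear[OF assms(1)] by (auto simp: linear_scale)
  ultimately have "((\<lambda>t. d (c t)) has_vector_derivative L e) (at t0)"
    by (simp add: has_vector_derivative_def o_def)
  thus ?thesis by (rule vector_derivative_at)
qed

lemma partials_eq_derivative:
  fixes d :: "'m::finite pt \<Rightarrow> real ^ 'm"
  assumes D: "(d has_derivative L) (at (x, y, z))"
  shows "Xd d (x, y, z) = L (1, 0, 0)" and "Yd d (x, y, z) = L (0, 1, 0)"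
    and "Zd d (x, y, z) *v u = L (0, 0, u)"
proof -
  show "Xd d (x, y, z) = L (1, 0, 0)"
    unfolding Xd_def using D
    by (auto simp: zero_prod_def
        intro!: vector_derivative_chain_line[where c="\<lambda>t. (t, y, z)"] derivative_eq_intros)
  show "Yd d (x, y, z) = L (0, 1, 0)"
    unfolding Yd_def using D
    by (auto simp: zero_prod_def
        intro!: vector_derivative_chain_line[where c="\<lambda>t. (x, t, z)"] derivative_eq_intros)
  have Zd_entry: "Zd d (x, y, z) $ j $ i = L (0, 0, axis i 1) $ j" for i j
  proof -
    have "(\<chi> l. if l = i then t else z $ l) = z + (t - z $ i) *\<^sub>R axis i 1" for t
      by (simp add: vec_eq_iff axis_def)
    then have "vector_derivative (\<lambda>t. d (x, y, \<chi> l. if l = i then t else z $ l)) (at (z $ i))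
        = L (0, 0, axis i 1)"
      using D by (auto simp: zero_prod_def intro!: derivative_eq_intros
          vector_derivative_chain_line[where c="\<lambda>t. (x, y, z + (t - z $ i) *\<^sub>R axis i 1)"])
    thus ?thesis by (simp add: Zd_def)
  qed
  have "linear (L \<circ> (\<lambda>u. (0, 0, u)))"
    by (rule linear_compose[OF _ has_derivative_linear[OF D]]) (auto intro: linearI)
  then have lin: "linear (\<lambda>u. L (0, 0, u))" by (simp add: o_def)
  have "L (0, 0, u) = (\<Sum>i\<in>UNIV. u $ i *\<^sub>R L (0, 0, axis i 1))"
    using linear_sum[OF lin, of "\<lambda>i. u $ i *\<^sub>R axis i 1" UNIV] linear_scale[OF lin]
      basis_expansion[of u]
    by (simp add: scalar_mult_eq_scaleR)
  then show "Zd d (x, y, z) *v u = L (0, 0, u)"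
    by (simp add: vec_eq_iff matrix_vector_mult_def Zd_entry sum_component mult.commute)
qed

lemma derivative_eq_partials:
  fixes d :: "'m::finite pt \<Rightarrow> real ^ 'm"
  assumes D: "(d has_derivative L) (at p)"
  shows "L (a, b, c) = a *\<^sub>R Xd d p + b *\<^sub>R Yd d p + Zd d p *v c"
proof -
  obtain x y z where p: "p = (x, y, z)" by (cases p) auto
  have lin: "linear L" by (rule has_derivative_linear[OF D])
  have "(a, b, c) = a *\<^sub>R (1, 0, 0) + b *\<^sub>R (0, 1, 0) + (0, 0, c)" by simp
  then have "L (a, b, c) = a *\<^sub>R L (1, 0, 0) + b *\<^sub>R L (0, 1, 0) + L (0, 0, c)"
    by (simp only: linear_add[OF lin] linear_scale[OF lin])
  thus ?thesis using partials_eq_derivative[OF D[unfolded p]] p by simp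
qed

section \<open>The renormalized map in coordinates\<close>

definition psi_v_form ::
  "('m::finite pt \<Rightarrow> real) \<Rightarrow> ('m pt \<Rightarrow> real ^ 'm) \<Rightarrow> (real \<Rightarrow> real) \<Rightarrow> real \<Rightarrow> 'm pt \<Rightarrow> 'm pt"
  where "psi_v_form A dl finv s w =
    (A w, s * fst (snd w), s *\<^sub>R snd (snd w) + dl (s * fst (snd w), finv (s * fst (snd w)), 0))"

definition renorm_delta ::
  "('m::finite pt \<Rightarrow> real) \<Rightarrow> ('m pt \<Rightarrow> real ^ 'm) \<Rightarrow> (real \<Rightarrow> real) \<Rightarrow> real \<Rightarrow> 'm pt \<Rightarrow> real ^ 'm"
  where "renorm_delta A dl finv s w =
    (1 / s) *\<^sub>R (dl (s * fst w, A w, dl (psi_v_form A dl finv s w)) - dl (s * fst w, finv (s * fst w), 0))"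

lemma renorm_step_Hmap_local_form:
  fixes B :: "'m::finite pt set"
  assumes "renorm_step B (henon f eps dl) (Hmap f eps dl finv) Hinv s (henon f' eps' dl')"
  defines "A \<equiv> \<lambda>w. fst (Hinv (s *\<^sub>R w))"
  obtains U where "open U" and "B \<subseteq> U"
    and "\<And>w. w \<in> U \<Longrightarrow> Hinv differentiable (at (s *\<^sub>R w))"
    and "\<And>w. w \<in> U \<Longrightarrow> Hinv (s *\<^sub>R w) = psi_v_form A dl finv s w"
    and "\<And>w. w \<in> U \<Longrightarrow> henon f eps dl (Hinv (s *\<^sub>R w))
                          = (s * fst w, A w, dl (psi_v_form A dl finv s w))"
    and "\<And>w. w \<in> U \<Longrightarrow> dl' w = renorm_delta A dl finv s w"
proof -
  from assms(1) obtain U D where "open U" "B \<subseteq> U"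
    and inv: "\<And>w. w \<in> U \<Longrightarrow> Hinv (s *\<^sub>R w) \<in> D \<and> Hmap f eps dl finv (Hinv (s *\<^sub>R w)) = s *\<^sub>R w
                            \<and> Hinv differentiable (at (s *\<^sub>R w))"
    and F': "\<And>w. w \<in> U \<Longrightarrow> henon f' eps' dl' w = (1 / s) *\<^sub>R
              Hmap f eps dl finv (henon f eps dl (henon f eps dl (Hinv (s *\<^sub>R w))))"
    unfolding renorm_step_def by metis
  have form: "Hinv (s *\<^sub>R w) = psi_v_form A dl finv s w
      \<and> henon f eps dl (Hinv (s *\<^sub>R w)) = (s * fst w, A w, dl (psi_v_form A dl finv s w))"
    if "w \<in> U" for w
  proof -
    obtain a b c where w: "w = (a, b, c)" by (cases w)
    obtain p1 p2 p3 where v: "Hinv (s *\<^sub>R w) = (p1, p2, p3)" by (cases "Hinv (s *\<^sub>R w)")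
    have "Hmap f eps dl finv (p1, p2, p3) = (s * a, s * b, s *\<^sub>R c)"
      using inv[OF that] v w by simp
    then have "f p1 - eps (p1, p2, p3) = s * a" "p2 = s * b" "p3 = s *\<^sub>R c + dl (p2, finv p2, 0)"
      by (auto simp: Hmap_def algebra_simps)
    then show ?thesis using v w by (simp add: psi_v_form_def henon_def A_def)
  qed
  show thesis
  proof
    show "dl' w = renorm_delta A dl finv s w" if "w \<in> U" for w
      using F'[OF that] unfolding form[OF that, THEN conjunct2]
      by (cases w) (simp add: henon_def Hmap_def renorm_delta_def)
  qed (use \<open>open U\<close> \<open>B \<subseteq> U\<close> inv form in blast)+
qed

lemma qd_has_vector_derivative:
  fixes dl :: "'m::finite pt \<Rightarrow> real ^ 'm"
  assumes "dl differentiable (at (t, finv t, 0))" and "finv differentiable (at t)"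
  shows "((\<lambda>t. dl (t, finv t, 0)) has_vector_derivative qd dl finv t) (at t)"
proof -
  have "(\<lambda>t. (t, finv t, 0 :: real ^ 'm)) differentiable (at t)"
    using assms(2) by (auto intro!: derivative_intros)
  then have "(dl \<circ> (\<lambda>t. (t, finv t, 0))) differentiable (at t)"
    using assms(1) by (rule differentiable_chain_at)
  then show ?thesis
    unfolding qd_def o_def by (simp add: vector_derivative_works[symmetric])
qed

lemma renorm_delta_has_derivative:
  fixes dl :: "'m::finite pt \<Rightarrow> real ^ 'm" and A :: "'m pt \<Rightarrow> real"
  assumes dA: "(A has_derivative DA) (at w)"
    and ddl: "\<And>p. (dl has_derivative Ld p) (at p)"
    and fx: "finv differentiable (at (s * fst w))" and fy: "finv differentiable (at (s * fst (snd w)))"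
  shows "(renorm_delta A dl finv s has_derivative (\<lambda>h. (1 / s) *\<^sub>R
      (Ld (s * fst w, A w, dl (psi_v_form A dl finv s w))
          (s * fst h, DA h, Ld (psi_v_form A dl finv s w)
              (DA h, s * fst (snd h),
               s *\<^sub>R snd (snd h) + (s * fst (snd h)) *\<^sub>R qd dl finv (s * fst (snd w))))
       - (s * fst h) *\<^sub>R qd dl finv (s * fst w)))) (at w)"
proof -
  have dl_chain: "((\<lambda>v. dl (k v)) has_derivative (\<lambda>h. Ld (k w) (k' h))) (at w)"
    if "(k has_derivative k') (at w)" for k :: "'m pt \<Rightarrow> 'm pt" and k'
    using diff_chain_at[OF that ddl] by (simp add: o_def)
  have q_chain: "((\<lambda>v. dl (s * g v, finv (s * g v), 0)) has_derivative
      (\<lambda>h. (s * g' h) *\<^sub>R qd dl finv (s * g w))) (at w)"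
    if dg: "(g has_derivative g') (at w)" and "finv differentiable (at (s * g w))"
    for g :: "'m pt \<Rightarrow> real" and g'
  proof -
    have "((\<lambda>t. dl (t, finv t, 0)) has_vector_derivative qd dl finv (s * g w)) (at (s * g w))"
      using qd_has_vector_derivative[OF differentiableI[OF ddl] that(2)] .
    moreover have "((\<lambda>v. s * g v) has_derivative (\<lambda>h. s * g' h)) (at w)"
      using dg by (auto intro!: derivative_eq_intros)
    ultimately show ?thesis
      using diff_chain_at by (fastforce simp: has_vector_derivative_def o_def)
  qed
  have "((\<lambda>v. fst v) has_derivative (\<lambda>h. fst h)) (at w)"
    and "((\<lambda>v. fst (snd v)) has_derivative (\<lambda>h. fst (snd h))) (at w)"
    by (auto intro!: derivative_eq_intros)
  note q_chain[OF this(1) fx] q_chain[OF this(2) fy]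
  then show ?thesis
    unfolding renorm_delta_def[abs_def] psi_v_form_def[abs_def]
    by (auto intro!: derivative_eq_intros dA dl_chain)
qed

definition N_identity :: "('m::finite pt \<Rightarrow> real ^ 'm) \<Rightarrow> ('m pt \<Rightarrow> 'm pt) \<Rightarrow> 'm pt \<Rightarrow> bool"
  where "N_identity dl F w \<longleftrightarrow> Yd dl (F w) + Zd dl (F w) *v Xd dl w = 0"

definition derivative_recursion ::
  "('m::finite pt \<Rightarrow> 'm pt) \<Rightarrow> ('m pt \<Rightarrow> 'm pt) \<Rightarrow> real \<Rightarrow> ('m pt \<Rightarrow> real ^ 'm)
     \<Rightarrow> (real \<Rightarrow> real) \<Rightarrow> ('m pt \<Rightarrow> real ^ 'm) \<Rightarrow> real \<Rightarrow> real \<Rightarrow> real ^ 'm \<Rightarrow> bool"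
  where "derivative_recursion F Hinv s dl finv dl' x y z \<longleftrightarrow>
     Xd dl' (x, y, z) = Xd dl (psi_c F Hinv s (x, y, z)) - qd dl finv (s * x)
     \<and> Yd dl' (x, y, z) = Zd dl (psi_c F Hinv s (x, y, z))
          *v (Yd dl (psi_v Hinv s (x, y, z)) + Zd dl (psi_v Hinv s (x, y, z)) *v qd dl finv (s * y))
     \<and> Zd dl' (x, y, z) = Zd dl (psi_c F Hinv s (x, y, z)) ** Zd dl (psi_v Hinv s (x, y, z))"

lemma derivative_recursion_renorm_step:
  fixes B :: "'m::finite pt set" and dl dl' :: "'m pt \<Rightarrow> real ^ 'm"
  assumes rs: "renorm_step B (henon f eps dl) (Hmap f eps dl finv) Hinv s (henon f' eps' dl')"
    and ddl: "\<And>p. dl differentiable (at p)"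
    and fx: "finv differentiable (at (s * x))" and fy: "finv differentiable (at (s * y))"
    and B: "(x, y, z) \<in> B"
    and N: "N_identity dl (henon f eps dl) (psi_v Hinv s (x, y, z))"
  shows "derivative_recursion (henon f eps dl) Hinv s dl finv dl' x y z"
proof -
  define A where "A = (\<lambda>v. fst (Hinv (s *\<^sub>R v)))"
  define P where "P = psi_v_form A dl finv s (x, y, z)"
  define G where "G = (s * x, A (x, y, z), dl P)"
  have "s \<noteq> 0" using rs by (simp add: renorm_step_def)
  obtain U where "open U" "B \<subseteq> U"
    and dHinv: "\<And>v. v \<in> U \<Longrightarrow> Hinv differentiable (at (s *\<^sub>R v))"
    and Hinv_eq: "\<And>v. v \<in> U \<Longrightarrow> Hinv (s *\<^sub>R v) = psi_v_form A dl finv s v"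
    and henon_eq: "\<And>v. v \<in> U \<Longrightarrow> henon f eps dl (Hinv (s *\<^sub>R v))
                                  = (s * fst v, A v, dl (psi_v_form A dl finv s v))"
    and dl'_eq: "\<And>v. v \<in> U \<Longrightarrow> renorm_delta A dl finv s v = dl' v"
    by (rule renorm_step_Hmap_local_form[OF rs]) (unfold A_def, metis)
  have "(x, y, z) \<in> U" using B \<open>B \<subseteq> U\<close> by auto
  have psi_v: "psi_v Hinv s (x, y, z) = P" and psi_c: "psi_c (henon f eps dl) Hinv s (x, y, z) = G"
    using Hinv_eq[OF \<open>(x, y, z) \<in> U\<close>] henon_eq[OF \<open>(x, y, z) \<in> U\<close>]
    by (simp_all add: psi_v_def psi_c_def P_def G_def)
  define DH where "DH = frechet_derivative Hinv (at (s *\<^sub>R (x, y, z)))"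
  have "((\<lambda>v. s *\<^sub>R v) has_derivative (\<lambda>h. s *\<^sub>R h)) (at (x, y, z))"
    by (auto intro!: derivative_eq_intros)
  moreover have "(Hinv has_derivative DH) (at (s *\<^sub>R (x, y, z)))"
    unfolding DH_def using dHinv[OF \<open>(x, y, z) \<in> U\<close>] by (rule frechet_derivative_works[THEN iffD1])
  ultimately have "((\<lambda>v. Hinv (s *\<^sub>R v)) has_derivative (\<lambda>h. DH (s *\<^sub>R h))) (at (x, y, z))"
    by (metis (no_types, lifting) diff_chain_at o_def ext)
  then have dA: "(A has_derivative (\<lambda>h. fst (DH (s *\<^sub>R h)))) (at (x, y, z))"
    unfolding A_def by (rule has_derivative_fst)
  define Ld where "Ld p = frechet_derivative dl (at p)" for p
  have dl_deriv: "(dl has_derivative Ld p) (at p)" for p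
    using ddl[of p] by (simp add: Ld_def frechet_derivative_works)
  note dE = renorm_delta_has_derivative[OF dA dl_deriv, unfolded fst_conv snd_conv, OF fx fy]
  note dl'_deriv = has_derivative_transform_within_open[OF dE \<open>open U\<close> \<open>(x, y, z) \<in> U\<close>, of dl']
  note partials = partials_eq_derivative[OF dl'_deriv[OF dl'_eq], folded P_def G_def]
  have N': "Zd dl G *v Xd dl P = - Yd dl G"
    using N unfolding N_identity_def psi_v psi_c[unfolded psi_c_def o_def psi_v]
    by (simp add: eq_neg_iff_add_eq_0 add.commute)
  note LP = derivative_eq_partials[OF dl_deriv[of P]]
   and LG = derivative_eq_partials[OF dl_deriv[of G]]
  show ?thesis
    unfolding derivative_recursion_def psi_v psi_c matrix_eq
    using \<open>s \<noteq> 0\<close>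
    by (simp add: partials G_def[symmetric] LP LG N' matrix_vector_mult_scaleR matrix_vector_mul_assoc algebra_simps)
qed

section \<open>Propagation of the identity defining \<open>\<N>\<close>\<close>

lemma psi_v_renorm_eq_psi_c:
  assumes "renorm_step B F H Hinv s F'" and "v \<in> B"
  shows "psi_v Hinv s (F' v) = F (psi_c F Hinv s v)"
proof -
  from assms(1) obtain U D where "s \<noteq> 0" "B \<subseteq> U" and Hinv_H: "\<And>v. v \<in> D \<Longrightarrow> Hinv (H v) = v"
    and F': "\<And>w. w \<in> U \<Longrightarrow> F (F (Hinv (s *\<^sub>R w))) \<in> D
                          \<and> F' w = (1 / s) *\<^sub>R H (F (F (Hinv (s *\<^sub>R w))))"
    unfolding renorm_step_def by metis
  from \<open>B \<subseteq> U\<close> assms(2) have "v \<in> U" by auto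
  with F' \<open>s \<noteq> 0\<close> have "s *\<^sub>R F' v = H (F (F (Hinv (s *\<^sub>R v))))" "F (F (Hinv (s *\<^sub>R v))) \<in> D"
    by auto
  then show ?thesis by (simp add: psi_v_def psi_c_def Hinv_H)
qed

text \<open>The Henon shape of \<open>F'\<close> (second coordinate of \<open>F' w\<close> equal to the first of \<open>w\<close>) makes
  the \<open>q\<close>-terms of the two recursions cancel.\<close>

lemma N_identity_renorm_step:
  assumes rs: "renorm_step B F H Hinv s F'" and "(x, y, z) \<in> B"
    and F': "F' (x, y, z) = (x', x, z')"
    and rec: "derivative_recursion F Hinv s dl finv dl' x y z"
    and rec': "derivative_recursion F Hinv s dl finv dl' x' x z'"
    and N: "N_identity dl F (psi_c F Hinv s (x, y, z))"
  shows "N_identity dl' F' (x, y, z)"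
proof -
  define c where "c = psi_c F Hinv s (x, y, z)"
  define c' where "c' = psi_c F Hinv s (x', x, z')"
  have v': "psi_v Hinv s (x', x, z') = F c"
    using psi_v_renorm_eq_psi_c[OF rs \<open>(x, y, z) \<in> B\<close>] by (simp add: F' c_def)
  have "Yd dl' (F' (x, y, z)) + Zd dl' (F' (x, y, z)) *v Xd dl' (x, y, z)
      = Zd dl c' *v (Yd dl (F c) + Zd dl (F c) *v qd dl finv (s * x))
        + (Zd dl c' ** Zd dl (F c)) *v (Xd dl c - qd dl finv (s * x))"
    using rec rec' by (simp add: derivative_recursion_def F' v' c_def c'_def)
  also have "\<dots> = Zd dl c' *v (Yd dl (F c) + Zd dl (F c) *v Xd dl c)"
    by (simp add: matrix_vector_mul_assoc[symmetric] algebra_simps)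
  also have "\<dots> = 0"
    using N by (simp add: N_identity_def c_def)
  finally show ?thesis by (simp add: N_identity_def)
qed

definition N_on :: "'m::finite pt set \<Rightarrow> ('m pt \<Rightarrow> real ^ 'm) \<Rightarrow> ('m pt \<Rightarrow> 'm pt) \<Rightarrow> bool"
  where "N_on B dl F \<longleftrightarrow> (\<forall>v\<in>B. F v \<in> B \<longrightarrow> N_identity dl F v)"

definition N_on_psi ::
  "'m::finite pt set \<Rightarrow> ('m pt \<Rightarrow> real ^ 'm) \<Rightarrow> ('m pt \<Rightarrow> 'm pt) \<Rightarrow> ('m pt \<Rightarrow> 'm pt) \<Rightarrow> real
     \<Rightarrow> ('m pt \<Rightarrow> 'm pt) \<Rightarrow> bool"
  where "N_on_psi B dl F Hinv s F' \<longleftrightarrow>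
    (\<forall>w\<in>B. N_identity dl F (psi_v Hinv s w)
            \<and> (F' w \<in> B \<longrightarrow> N_identity dl F (psi_c F Hinv s w)))"

lemma N_on_psi_if_in_N:
  assumes "in_N B f eps dl finv s Hinv F'"
  shows "N_on_psi B dl (henon f eps dl) Hinv s F'"
  using assms by (auto simp: in_N_def N_on_psi_def N_identity_def)

lemma N_on_psi_if_N_on:
  assumes rs: "renorm_step B F H Hinv s F'" and "N_on B dl F"
  shows "N_on_psi B dl F Hinv s F'"
  unfolding N_on_psi_def
proof (intro ballI conjI impI)
  fix w assume "w \<in> B"
  then have "psi_v Hinv s w \<in> B" "psi_c F Hinv s w \<in> B"
    using rs by (auto simp: renorm_step_def)
  then show "N_identity dl F (psi_v Hinv s w)"
    using \<open>N_on B dl F\<close> by (simp add: N_on_def psi_c_def)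
  assume "F' w \<in> B"
  then have "F (psi_c F Hinv s w) \<in> B"
    using rs by (auto simp: renorm_step_def psi_v_renorm_eq_psi_c[OF rs \<open>w \<in> B\<close>, symmetric])
  then show "N_identity dl F (psi_c F Hinv s w)"
    using \<open>N_on B dl F\<close> \<open>psi_c F Hinv s w \<in> B\<close> by (simp add: N_on_def)
qed

lemma N_on_renorm_step:
  fixes B :: "'m::finite pt set"
  assumes rs: "renorm_step B (henon f eps dl) (Hmap f eps dl finv) Hinv s (henon f' eps' dl')"
    and ddl: "\<And>p. dl differentiable (at p)"
    and dfinv: "\<And>x y z. (x, y, z) \<in> B \<Longrightarrow>
                  finv differentiable (at (s * x)) \<and> finv differentiable (at (s * y))"
    and N: "N_on_psi B dl (henon f eps dl) Hinv s (henon f' eps' dl')"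
  shows "N_on B dl' (henon f' eps' dl')"
  unfolding N_on_def
proof (intro ballI impI)
  fix v assume "v \<in> B" "henon f' eps' dl' v \<in> B"
  obtain x y z where v: "v = (x, y, z)" by (cases v)
  obtain x' z' where F': "henon f' eps' dl' (x, y, z) = (x', x, z')"
    by (simp add: henon_def)
  have rec: "derivative_recursion (henon f eps dl) Hinv s dl finv dl' a b c"
    if "(a, b, c) \<in> B" for a b c
    using derivative_recursion_renorm_step[OF rs ddl _ _ that] dfinv[OF that] N that
    by (auto simp: N_on_psi_def)
  have "(x, y, z) \<in> B" "(x', x, z') \<in> B"
    using \<open>v \<in> B\<close> \<open>henon f' eps' dl' v \<in> B\<close> by (simp_all add: v F')
  moreover have "N_identity dl (henon f eps dl) (psi_c (henon f eps dl) Hinv s (x, y, z))"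
    using N \<open>v \<in> B\<close> \<open>henon f' eps' dl' v \<in> B\<close> by (simp add: N_on_psi_def v)
  ultimately show "N_identity dl' (henon f' eps' dl') v"
    unfolding v using N_identity_renorm_step[OF rs _ F' rec rec] by blast
qed


lemma renormalizable_nD:
  assumes "renormalizable_n B n f eps dl finv sg Hinv" and "i < n"
  shows "renorm_step B (henon (f i) (eps i) (dl i)) (Hmap (f i) (eps i) (dl i) (finv i))
           (Hinv i) (sg i) (henon (f (Suc i)) (eps (Suc i)) (dl (Suc i)))"
    and "\<And>p. dl i differentiable (at p)"
    and "\<And>x y z. (x, y, z) \<in> B \<Longrightarrow>
           finv i differentiable (at (sg i * x)) \<and> finv i differentiable (at (sg i * y))"
  using assms unfolding renormalizable_n_def by (auto dest!: spec[of _ i])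

lemma N_on_psi_renormalizable_n:
  assumes inN: "in_N B (f 0) (eps 0) (dl 0) (finv 0) (sg 0) (Hinv 0) (henon (f 1) (eps 1) (dl 1))"
    and rn: "renormalizable_n B n f eps dl finv sg Hinv"
    and "i < n"
  shows "N_on_psi B (dl i) (henon (f i) (eps i) (dl i)) (Hinv i) (sg i)
           (henon (f (Suc i)) (eps (Suc i)) (dl (Suc i)))"
  using \<open>i < n\<close>
proof (induction i)
  case 0
  show ?case using N_on_psi_if_in_N[OF inN] by simp
next
  case (Suc i)
  then have "N_on B (dl (Suc i)) (henon (f (Suc i)) (eps (Suc i)) (dl (Suc i)))"
    using N_on_renorm_step renormalizable_nD[OF rn] by (meson Suc_lessD)
  then show ?case
    using N_on_psi_if_N_on renormalizable_nD(1)[OF rn Suc.prems] by blast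
qed

theorem lemma3p1:
  fixes B :: "'m::finite pt set"
    and f :: "nat \<Rightarrow> real \<Rightarrow> real" and eps :: "nat \<Rightarrow> 'm pt \<Rightarrow> real"
    and dl :: "nat \<Rightarrow> 'm pt \<Rightarrow> real ^ 'm" and finv :: "nat \<Rightarrow> real \<Rightarrow> real"
    and sg :: "nat \<Rightarrow> real" and Hinv :: "nat \<Rightarrow> 'm pt \<Rightarrow> 'm pt"
    and n k :: nat and x y :: real and z :: "real ^ 'm"
  assumes "hypercube B"
    and "in_N B (f 0) (eps 0) (dl 0) (finv 0) (sg 0) (Hinv 0) (henon (f 1) (eps 1) (dl 1))"
    and "renormalizable_n B n f eps dl finv sg Hinv"
    and "1 \<le> k" and "k \<le> n"
    and "(x, y, z) \<in> B"
  shows "Xd (dl k) (x, y, z) =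
           Xd (dl (k - 1)) (psi_c (henon (f (k - 1)) (eps (k - 1)) (dl (k - 1)))
                              (Hinv (k - 1)) (sg (k - 1)) (x, y, z))
           - qd (dl (k - 1)) (finv (k - 1)) (sg (k - 1) * x)
         \<and> Yd (dl k) (x, y, z) =
           Zd (dl (k - 1)) (psi_c (henon (f (k - 1)) (eps (k - 1)) (dl (k - 1)))
                              (Hinv (k - 1)) (sg (k - 1)) (x, y, z))
           *v (Yd (dl (k - 1)) (psi_v (Hinv (k - 1)) (sg (k - 1)) (x, y, z))
               + Zd (dl (k - 1)) (psi_v (Hinv (k - 1)) (sg (k - 1)) (x, y, z))
                 *v qd (dl (k - 1)) (finv (k - 1)) (sg (k - 1) * y))
         \<and> Zd (dl k) (x, y, z) =
           Zd (dl (k - 1)) (psi_c (henon (f (k - 1)) (eps (k - 1)) (dl (k - 1)))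
                              (Hinv (k - 1)) (sg (k - 1)) (x, y, z))
           ** Zd (dl (k - 1)) (psi_v (Hinv (k - 1)) (sg (k - 1)) (x, y, z))"
proof -
  obtain i where k: "k = Suc i" and "i < n"
    using \<open>1 \<le> k\<close> \<open>k \<le> n\<close> by (cases k) auto
  note step = renormalizable_nD[OF assms(3) \<open>i < n\<close>]
  have "N_identity (dl i) (henon (f i) (eps i) (dl i)) (psi_v (Hinv i) (sg i) (x, y, z))"
    using N_on_psi_renormalizable_n[OF assms(2,3) \<open>i < n\<close>] \<open>(x, y, z) \<in> B\<close>
    by (simp add: N_on_psi_def)
  with step \<open>(x, y, z) \<in> B\<close>
  have "derivative_recursion (henon (f i) (eps i) (dl i)) (Hinv i) (sg i) (dl i) (finv i) (dl (Suc i)) x y z"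
    by (meson derivative_recursion_renorm_step)
  then show ?thesis by (simp add: k derivative_recursion_def)
qed

end
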